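(* For $j \geq 0$, define $t_{2j} = (ca)^j$ and $t_{2j+1} = a(ca)^j$. Let $k_i$ denote the $i$-th row in the matrix $K$. Then $k_i = t_i(k_0)$.
   Context: Let $X_3=\{0,1,2\}$. Define matrices $K_n$ of size $3^n \times n$ with entries in $X_3$ recursively by \[ K_1 = \begin{bmatrix} 0 \\ 1 \\ 2 \end{bmatrix}, \qquad K_{n+1} = \begin{bmatrix} K_n & 0_n \\ K_n^R & 1_n \\ K_n & 2_n \end{bmatrix}, \] where $K_n^R$ is obtained from $K_n$ by reversing the order of its rows, and $0_n$, $1_n$, $2_n$ are column vectors with $3^n$ entries all equal to $0$, $1$, $2$ respectively. Since $K_n$ is the upper left corner of $K_{n+1}$, the infinite limit matrix $K=\lim_{n\to\infty} K_n$ is well defined; rows are indexed starting from $0$, and each row is regarded as an infinite word over $X_3$ ending in $0^\infty$ (so $k_0 = 0^\infty$). The maps $a$ and $c$ are the ternary tree automorphisms (acting on finite and infinite words over $X_3$) defined recursively for $\{i,j\}=\{0,1\}$ (for $a$) and $\{i,j\}=\{1,2\}$ (for $c$) by: $a_{ij}(\emptyset)=\emptyset$, $a_{ij}(iw)=jw$, $a_{ij}(jw)=iw$, $a_{ij}(xw)=x\,a_{ij}(w)$ for $x\notin\{i,j\}$; i.e. $a=a_{01}$ changes the first occurrence of $0$ or $1$ in a word to the other symbol, and $c=a_{12}$ changes the first occurrence of $1$ or $2$ to the other symbol. Composition is from right to left. *)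

theory Defs
  imports Main
begin

text \<open>Symbols of X_3 = {0,1,2} are represented as natural numbers; infinite words
  over X_3 are functions nat => nat (position m gives the m-th letter).\<close>

text \<open>Kp n is the matrix K_(n+1) (size 3^(n+1) x (n+1)); Kp n r col is its entry in
  row r, column col (0-indexed).  Columns col >= n+1 are 0, i.e. each row is read
  as an infinite word ending in 0^infinity.\<close>
primrec Kp :: "nat \<Rightarrow> nat \<Rightarrow> nat \<Rightarrow> nat" where
  "Kp 0 r col = (if col = 0 then r else 0)"
| "Kp (Suc n) r col =
     (let N = 3 ^ (Suc n); q = r div N; s = r mod N in
      if col < Suc n then (if q = 1 then Kp n (N - 1 - s) col else Kp n s col)
      else if col = Suc n then q else 0)"

text \<open>Row i of the limit matrix K, as an infinite word: taken from K_(n+1) with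
  n = max i col, which is large enough (3^(n+1) > i and col relevant).\<close>
definition krow :: "nat \<Rightarrow> (nat \<Rightarrow> nat)" where
  "krow i = (\<lambda>col. Kp (max i col) i col)"

fun swp :: "nat \<Rightarrow> nat \<Rightarrow> nat list \<Rightarrow> nat list" where
  "swp i j [] = []"
| "swp i j (x # w) = (if x = i then j # w else if x = j then i # w else x # swp i j w)"

definition swpInf :: "nat \<Rightarrow> nat \<Rightarrow> (nat \<Rightarrow> nat) \<Rightarrow> (nat \<Rightarrow> nat)" where
  "swpInf i j w = (\<lambda>m. swp i j (map w [0..<Suc m]) ! m)"

definition aA :: "(nat \<Rightarrow> nat) \<Rightarrow> (nat \<Rightarrow> nat)" where
  "aA = swpInf 0 1"

definition cA :: "(nat \<Rightarrow> nat) \<Rightarrow> (nat \<Rightarrow> nat)" where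
  "cA = swpInf 1 2"

definition tmap :: "nat \<Rightarrow> (nat \<Rightarrow> nat) \<Rightarrow> (nat \<Rightarrow> nat)" where
  "tmap i = (if even i then (cA \<circ> aA) ^^ (i div 2) else aA \<circ> ((cA \<circ> aA) ^^ (i div 2)))"


end

theory Submission
  imports Defs
begin

text \<open>K is a ternary reflected Gray code: row r+1 arises from row r by a when r is even
  and by c when r is odd, i.e. by swapping the first letter that lies in {0,1} resp. {1,2}. Inside each of the three blocks of K_(n+1) the
  step is inherited from K_n (the block length 3^n is odd, so the parities of the row indices
  agree): directly in the outer blocks, and in the reversed middle block because a and c are
  involutions. The new last column is not touched there, since some earlier letter already
  lies in the relevant pair. At the two block boundaries the old columns read 2...2 resp.
  0...0, so the swapped letter is the new last one, which goes from 0 to 1 resp. from 1 to 2.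
  Since t_(i+1) is t_i followed by a or c according to the parity of i, induction on i
  finishes the proof.\<close>

definition swap_letter :: "nat \<Rightarrow> nat \<Rightarrow> nat \<Rightarrow> nat" where
  "swap_letter i j x = (if x = i then j else if x = j then i else x)"

lemma nth_swp:
  "m < length xs \<Longrightarrow>
   swp i j xs ! m = (if \<exists>k<m. xs ! k \<in> {i, j} then xs ! m else swap_letter i j (xs ! m))"
proof (induction xs arbitrary: m)
  case Nil
  then show ?case by simp
next
  case (Cons x xs)
  show ?case
  proof (cases m)
    case 0
    then show ?thesis by (simp add: swap_letter_def)
  next
    case (Suc m')
    have "(\<exists>k<Suc m'. (x # xs) ! k \<in> {i, j}) \<longleftrightarrow> x \<in> {i, j} \<or> (\<exists>k<m'. xs ! k \<in> {i, j})"
      by (auto simp: less_Suc_eq_0_disj)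
    with Cons Suc show ?thesis by auto
  qed
qed

lemma swpInf_apply:
  "swpInf i j w m = (if \<exists>k<m. w k \<in> {i, j} then w m else swap_letter i j (w m))"
proof -
  have "\<forall>k<m. map w [0..<Suc m] ! k = w k"
    by (simp del: upt_Suc)
  then show ?thesis
    unfolding swpInf_def by (subst nth_swp) (auto simp del: upt_Suc)
qed

lemma swpInf_in_pair_iff: "swpInf i j w m \<in> {i, j} \<longleftrightarrow> w m \<in> {i, j}"
  by (auto simp: swpInf_apply swap_letter_def)

lemma swpInf_swpInf: "i \<noteq> j \<Longrightarrow> swpInf i j (swpInf i j w) = w"
proof
  fix m
  assume "i \<noteq> j"
  have "(\<exists>k<m. swpInf i j w k \<in> {i, j}) \<longleftrightarrow> (\<exists>k<m. w k \<in> {i, j})"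
    by (simp only: swpInf_in_pair_iff)
  with \<open>i \<noteq> j\<close> show "swpInf i j (swpInf i j w) m = w m"
    by (simp only: swpInf_apply[of i j "swpInf i j w"]) (auto simp: swpInf_apply swap_letter_def)
qed

definition snoc_word :: "(nat \<Rightarrow> nat) \<Rightarrow> nat \<Rightarrow> nat \<Rightarrow> nat \<Rightarrow> nat" where
  "snoc_word u n x = (\<lambda>c. if c \<le> n then u c else if c = Suc n then x else 0)"

lemma swpInf_snoc_word:
  assumes "k \<le> n" "u k \<in> {i, j}"
  shows "swpInf i j (snoc_word u n x) = snoc_word (swpInf i j u) n x"
proof
  fix c
  show "swpInf i j (snoc_word u n x) c = snoc_word (swpInf i j u) n x c"
  proof (cases "c \<le> n")
    case True
    then have prefix: "(\<exists>k<c. snoc_word u n x k \<in> {i, j}) \<longleftrightarrow> (\<exists>k<c. u k \<in> {i, j})"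
      by (auto simp: snoc_word_def)
    from True show ?thesis
      unfolding swpInf_apply[of i j "snoc_word u n x"] prefix by (auto simp: swpInf_apply snoc_word_def)
  next
    case False
    with assms have "\<exists>k<c. snoc_word u n x k \<in> {i, j}"
      by (auto simp: snoc_word_def intro!: exI[of _ k])
    with False show ?thesis
      by (simp add: swpInf_apply snoc_word_def)
  qed
qed

lemma swpInf_snoc_word_fresh:
  assumes "i \<noteq> j" "\<forall>k\<le>n. u k \<notin> {i, j}"
  shows "swpInf i j (snoc_word u n i) = snoc_word u n j"
proof
  fix c
  show "swpInf i j (snoc_word u n i) c = snoc_word u n j c"
  proof (cases "c \<le> Suc n")
    case True
    with assms show ?thesis
      by (auto simp: swpInf_apply snoc_word_def swap_letter_def)
  next
    case False
    then have "\<exists>k<c. snoc_word u n i k \<in> {i, j}"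
      by (auto simp: snoc_word_def intro!: exI[of _ "Suc n"])
    with False show ?thesis
      by (simp add: swpInf_apply snoc_word_def)
  qed
qed

lemma Kp_Suc_block:
  assumes "s < 3 ^ Suc n"
  shows "Kp (Suc n) (q * 3 ^ Suc n + s) =
           snoc_word (Kp n (if q = 1 then 3 ^ Suc n - 1 - s else s)) n q"
proof -
  define N :: nat where "N = 3 ^ Suc n"
  have block: "(q * N + s) div N = q" "(q * N + s) mod N = s"
    using assms by (simp_all add: N_def)
  show ?thesis
    unfolding Kp.simps(2) Let_def N_def[symmetric] block by (simp add: snoc_word_def fun_eq_iff)
qed

lemma Kp_first_row: "Kp n 0 c = 0"
  by (induction n arbitrary: c) (auto simp: Let_def)

lemma Kp_beyond_width: "n < c \<Longrightarrow> Kp n r c = 0"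
  by (induction n arbitrary: r) (auto simp: Let_def)

declare Kp.simps(2) [simp del]

lemma Kp_last_row: "Kp n (3 ^ Suc n - 1) c = (if c \<le> n then 2 else 0)"
proof (induction n arbitrary: c)
  case 0
  then show ?case by simp
next
  case (Suc n)
  define N :: nat where "N = 3 ^ Suc n"
  have "3 ^ Suc (Suc n) - 1 = 2 * N + (N - 1)" and "N - 1 < N"
    by (simp_all add: N_def)
  then have "Kp (Suc n) (3 ^ Suc (Suc n) - 1) = snoc_word (Kp n (N - 1)) n 2"
    using Kp_Suc_block[of "N - 1" n 2] by (simp add: N_def)
  then show ?case
    using Suc.IH by (simp add: N_def snoc_word_def)
qed

lemma Kp_Suc_low_row: "r < 3 ^ Suc n \<Longrightarrow> Kp (Suc n) r = Kp n r"
  using Kp_Suc_block[of r n 0]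
  by (auto simp: snoc_word_def fun_eq_iff Kp_beyond_width)

lemma Kp_stable:
  assumes "r < 3 ^ Suc n" "n \<le> m"
  shows "Kp m r = Kp n r"
  using assms(2)
proof (induction m rule: dec_induct)
  case (step k)
  have "(3::nat) ^ Suc n \<le> 3 ^ Suc k"
    using \<open>n \<le> k\<close> by (intro power_increasing) simp_all
  with assms(1) have "r < 3 ^ Suc k"
    by linarith
  with step.IH show ?case
    by (simp only: Kp_Suc_low_row)
qed simp

lemma less_three_power_Suc: "i < 3 ^ Suc i"
proof -
  have "i < 2 ^ i"
    by (rule less_exp)
  also have "\<dots> \<le> 3 ^ i"
    by (rule power_mono) simp_all
  finally show ?thesis
    by simp
qed

lemma krow_eq_Kp:
  assumes "i \<le> n"
  shows "krow i = Kp n i"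
proof
  fix c
  have "krow i c = Kp i i c"
    using Kp_stable[OF less_three_power_Suc, of i "max i c"] by (simp add: krow_def)
  also have "\<dots> = Kp n i c"
    using Kp_stable[OF less_three_power_Suc assms] by simp
  finally show "krow i c = Kp n i c" .
qed

definition row_gen :: "nat \<Rightarrow> (nat \<Rightarrow> nat) \<Rightarrow> nat \<Rightarrow> nat" where
  "row_gen r = swpInf (r mod 2) (Suc (r mod 2))"

text \<open>The second conjunct says that the generator already acts within the first n+1
  letters, so appending a further column does not interfere with it.\<close>
definition gray_step :: "nat \<Rightarrow> nat \<Rightarrow> bool" where
  "gray_step n r \<longleftrightarrow>
     Kp n (Suc r) = row_gen r (Kp n r) \<and> (\<exists>k\<le>n. Kp n r k \<in> {r mod 2, Suc (r mod 2)})"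

lemma gray_step_forward_block:
  assumes "even q" "Suc s < 3 ^ Suc n" "gray_step n s"
  shows "gray_step (Suc n) (q * 3 ^ Suc n + s)"
proof -
  define r where "r = q * 3 ^ Suc n + s"
  have "r mod 2 = (q * 3 ^ Suc n mod 2 + s) mod 2"
    by (simp add: r_def mod_add_left_eq)
  then have parity: "r mod 2 = s mod 2"
    using \<open>even q\<close> by simp
  from \<open>gray_step n s\<close> obtain k where k: "k \<le> n" "Kp n s k \<in> {r mod 2, Suc (r mod 2)}"
    and step: "Kp n (Suc s) = row_gen r (Kp n s)"
    unfolding gray_step_def row_gen_def parity by blast
  have "q \<noteq> 1"
    using \<open>even q\<close> by auto
  then have rows: "Kp (Suc n) r = snoc_word (Kp n s) n q"
    "Kp (Suc n) (Suc r) = snoc_word (Kp n (Suc s)) n q"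
    using Kp_Suc_block[of s n q] Kp_Suc_block[of "Suc s" n q] assms(2)
    by (simp_all add: r_def)
  have "Kp (Suc n) (Suc r) = row_gen r (Kp (Suc n) r)"
    unfolding rows step row_gen_def using swpInf_snoc_word k by simp
  moreover have "Kp (Suc n) r k \<in> {r mod 2, Suc (r mod 2)}"
    using k by (simp add: rows snoc_word_def)
  ultimately show ?thesis
    unfolding gray_step_def r_def[symmetric] using k(1) le_SucI by blast
qed

lemma gray_step_reversed_block:
  assumes "Suc s < 3 ^ Suc n" "gray_step n (3 ^ Suc n - 2 - s)"
  shows "gray_step (Suc n) (3 ^ Suc n + s)"
proof -
  define N :: nat where "N = 3 ^ Suc n"
  define x where "x = N - 2 - s"
  define r where "r = N + s"
  have x: "Suc x = N - 1 - s" "x = N - 1 - Suc s"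
    using assms(1) by (simp_all add: x_def N_def)
  have parity: "r mod 2 = x mod 2"
  proof -
    have "r = x + 2 * (Suc s)"
      using assms(1) by (simp add: r_def x_def N_def)
    then show ?thesis by simp
  qed
  have "gray_step n x"
    using assms(2) by (simp only: x_def N_def)
  then obtain k where k: "k \<le> n" "Kp n x k \<in> {r mod 2, Suc (r mod 2)}"
    and step: "Kp n (Suc x) = row_gen r (Kp n x)"
    unfolding gray_step_def row_gen_def parity by blast
  have k_Suc: "Kp n (Suc x) k \<in> {r mod 2, Suc (r mod 2)}"
    using k(2) unfolding step row_gen_def swpInf_in_pair_iff .
  have rows: "Kp (Suc n) r = snoc_word (Kp n (Suc x)) n 1"
    "Kp (Suc n) (Suc r) = snoc_word (Kp n x) n 1"
    using Kp_Suc_block[of s n 1] Kp_Suc_block[of "Suc s" n 1] assms(1) x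
    by (simp_all add: r_def N_def)
  have "Kp n x = row_gen r (Kp n (Suc x))"
    unfolding step row_gen_def by (simp add: swpInf_swpInf)
  then have "Kp (Suc n) (Suc r) = row_gen r (Kp (Suc n) r)"
    unfolding rows row_gen_def using swpInf_snoc_word k(1) k_Suc by simp
  moreover have "Kp (Suc n) r k \<in> {r mod 2, Suc (r mod 2)}"
    using k(1) k_Suc by (simp add: rows snoc_word_def)
  ultimately show ?thesis
    unfolding gray_step_def N_def[symmetric] r_def[symmetric] using k(1) le_SucI by blast
qed

lemma gray_step_first_boundary: "gray_step (Suc n) (3 ^ Suc n - 1)"
proof -
  define N :: nat where "N = 3 ^ Suc n"
  define r where "r = N - 1"
  have "odd N"
    by (simp add: N_def)
  then have parity: "r mod 2 = 0" and r: "r < N" "Suc r = 1 * N + 0"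
    by (simp_all add: r_def odd_pos)
  then have rows: "Kp (Suc n) r = snoc_word (Kp n r) n 0" "Kp (Suc n) (Suc r) = snoc_word (Kp n r) n 1"
    using Kp_Suc_block[of r n 0] Kp_Suc_block[of 0 n 1] by (simp_all add: N_def r_def)
  have "\<forall>k\<le>n. Kp n r k \<notin> {0, 1}"
    using Kp_last_row[of n] by (simp add: r_def N_def)
  then have "Kp (Suc n) (Suc r) = row_gen r (Kp (Suc n) r)"
    unfolding rows row_gen_def parity One_nat_def[symmetric]
    by (intro swpInf_snoc_word_fresh[symmetric]) simp_all
  moreover have "Kp (Suc n) r (Suc n) \<in> {r mod 2, Suc (r mod 2)}"
    by (simp add: rows parity snoc_word_def)
  ultimately show ?thesis
    unfolding gray_step_def N_def[symmetric] r_def[symmetric] by blast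
qed

lemma gray_step_second_boundary: "gray_step (Suc n) (3 ^ Suc n + (3 ^ Suc n - 1))"
proof -
  define N :: nat where "N = 3 ^ Suc n"
  define r where "r = N + (N - 1)"
  have "0 < N"
    by (simp add: N_def)
  then have r: "r = 1 * N + (N - 1)" "Suc r = 2 * N + 0" and r_odd: "r = 2 * (N - 1) + 1"
    by (simp_all add: r_def)
  have parity: "r mod 2 = 1"
    unfolding r_odd by simp
  have rows: "Kp (Suc n) r = snoc_word (Kp n 0) n 1" "Kp (Suc n) (Suc r) = snoc_word (Kp n 0) n 2"
    unfolding r using Kp_Suc_block[of "N - 1" n 1] Kp_Suc_block[of 0 n 2] \<open>0 < N\<close>
    by (simp_all add: N_def)
  have "Kp (Suc n) (Suc r) = row_gen r (Kp (Suc n) r)"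
    unfolding rows row_gen_def parity Suc_1
    by (intro swpInf_snoc_word_fresh[symmetric]) (simp_all add: Kp_first_row)
  moreover have "Kp (Suc n) r (Suc n) \<in> {r mod 2, Suc (r mod 2)}"
    by (simp add: rows parity snoc_word_def)
  ultimately show ?thesis
    unfolding gray_step_def N_def[symmetric] r_def[symmetric] by blast
qed

lemma gray_step_Kp: "Suc r < 3 ^ Suc n \<Longrightarrow> gray_step n r"
proof (induction n arbitrary: r)
  case 0
  then have "r = 0 \<or> r = 1"
    by auto
  then show ?case
    by (auto simp: gray_step_def row_gen_def swpInf_apply swap_letter_def fun_eq_iff)
next
  case (Suc n)
  define N :: nat where "N = 3 ^ Suc n"
  define q where "q = r div N"
  define s where "s = r mod N"
  have r: "r = q * N + s" and "s < N"
    using div_mult_mod_eq[of r N] by (simp_all add: q_def s_def N_def)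
  have "Suc r < 3 * N"
    using Suc.prems by (simp add: N_def)
  then have "q < 3"
    using r by (metis add_lessD1 Suc_lessD mult_less_cancel2)
  consider (inner) "Suc s < N" | (boundary) "s = N - 1"
    using \<open>s < N\<close> by linarith
  then show ?case
  proof cases
    case inner
    show ?thesis
    proof (cases "q = 1")
      case True
      have "gray_step n (N - 2 - s)"
        using Suc.IH inner by (simp add: N_def)
      then show ?thesis
        using gray_step_reversed_block inner True r by (simp add: N_def)
    next
      case False
      with \<open>q < 3\<close> have "q = 0 \<or> q = 2"
        by linarith
      then have "even q"
        by auto
      then show ?thesis
        using gray_step_forward_block Suc.IH inner r by (simp add: N_def)
    qed
  next
    case boundary
    have "0 < N"
      by (simp add: N_def)
    have "q \<noteq> 2"
      using \<open>Suc r < 3 * N\<close> r boundary \<open>0 < N\<close> by auto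
    with \<open>q < 3\<close> have "q = 0 \<or> q = 1"
      by linarith
    then show ?thesis
      using r boundary gray_step_first_boundary gray_step_second_boundary by (auto simp: N_def)
  qed
qed

lemma krow_Suc: "krow (Suc i) = row_gen i (krow i)"
proof -
  have "gray_step (Suc i) i"
    by (rule gray_step_Kp) (rule less_three_power_Suc)
  then show ?thesis
    using krow_eq_Kp[of "Suc i" "Suc i"] krow_eq_Kp[of i "Suc i"] by (simp add: gray_step_def)
qed

lemma tmap_Suc: "tmap (Suc i) = row_gen i \<circ> tmap i"
proof (cases "even i")
  case True
  then have "Suc i div 2 = i div 2"
    by presburger
  with True show ?thesis
    by (simp add: tmap_def row_gen_def aA_def)
next
  case False
  then have "Suc i div 2 = Suc (i div 2)" and "i mod 2 = 1"
    by presburger+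
  then have "row_gen i = cA"
    by (simp add: row_gen_def cA_def) (simp add: numeral_2_eq_2)
  with False show ?thesis
    by (simp add: tmap_def aA_def o_assoc)
qed

theorem mainTheorem9:
  shows "\<forall>i::nat. krow i = tmap i (krow 0)"
proof
  fix i :: nat
  show "krow i = tmap i (krow 0)"
  proof (induction i)
    case 0
    then show ?case
      by (simp add: tmap_def)
  next
    case (Suc i)
    then show ?case
      by (simp add: krow_Suc tmap_Suc)
  qed
qed

end
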